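(* Let $m\ge 2$ and $r\ge 1$ be integers, and for each $i\in\{1,\dots,r\}$ let $s_i\in\{1,\dots,m-1\}$ be an integer. Let $\widetilde{R}=\mathbb{Q}[x_{i,j}\mid 0\le i\le r,\ 1\le j\le m]$ be the polynomial ring in $(r+1)m$ variables. For each $i\in\{1,\dots,r\}$, writing $s=s_i$, consider the $m$ elements $$x_{i,s}+x_{i,s+1}-x_{i-1,s}-x_{i-1,s+1},\qquad x_{i,s}x_{i,s+1}-x_{i-1,s}x_{i-1,s+1},\qquad x_{i,j}-x_{i-1,j}\ \ (1\le j\le m,\ j\neq s,s+1).$$ Then the sequence of $rm$ elements of $\widetilde{R}$ obtained by listing these elements for $i=1$, then for $i=2$, and so on up to $i=r$, is a regular sequence in $\widetilde{R}$.
   Context: A sequence $f_1,\dots,f_n$ in a commutative ring $A$ is regular if for each $k$ the element $f_k$ is not a zero divisor in $A/(f_1,\dots,f_{k-1})$ and $A/(f_1,\dots,f_n)\neq 0$. (In the paper these elements arise from a resolution $D$ of a closed braid diagram on $m$ strands with $r$ wide edges, the $i$-th wide edge being in position $s_i$; the variables $x_{i,j}$ label the arcs between consecutive wide edges.) *)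

theory Defs
  imports Complex_Main "HOL-Library.Poly_Mapping"
begin

text \<open>Multivariate polynomials over \<rat> in variables indexed by pairs (i,j):
  a polynomial maps monomials (finitely supported exponent vectors) to coefficients.\<close>
type_synonym mpoly = "((nat \<times> nat) \<Rightarrow>\<^sub>0 nat) \<Rightarrow>\<^sub>0 rat"

definition Var :: "nat \<Rightarrow> nat \<Rightarrow> mpoly" where
  "Var i j = Poly_Mapping.single (Poly_Mapping.single (i, j) 1) 1"

definition poly_ring_in :: "(nat \<times> nat) set \<Rightarrow> mpoly set" where
  "poly_ring_in V = {p::mpoly. \<forall>mon \<in> Poly_Mapping.keys p. Poly_Mapping.keys mon \<subseteq> V}"

definition ideal_in :: "'a::comm_ring_1 set \<Rightarrow> 'a list \<Rightarrow> 'a set" where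
  "ideal_in A fs = {(\<Sum>k<length fs. c k * fs ! k) | c. \<forall>k. c k \<in> A}"

definition regular_seq_in :: "'a::comm_ring_1 set \<Rightarrow> 'a list \<Rightarrow> bool" where
  "regular_seq_in A fs \<longleftrightarrow>
     set fs \<subseteq> A \<and>
     (\<forall>k < length fs. \<forall>a \<in> A.
        a * fs ! k \<in> ideal_in A (take k fs) \<longrightarrow> a \<in> ideal_in A (take k fs)) \<and>
     1 \<notin> ideal_in A fs"

definition edge_elems :: "nat \<Rightarrow> nat \<Rightarrow> nat \<Rightarrow> mpoly list" where
  "edge_elems m i s =
     [Var i s + Var i (s+1) - Var (i-1) s - Var (i-1) (s+1),
      Var i s * Var i (s+1) - Var (i-1) s * Var (i-1) (s+1)]
     @ map (\<lambda>j. Var i j - Var (i-1) j) (filter (\<lambda>j. j \<noteq> s \<and> j \<noteq> s+1) [1..<m+1])"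

definition full_seq :: "nat \<Rightarrow> nat \<Rightarrow> (nat \<Rightarrow> nat) \<Rightarrow> mpoly list" where
  "full_seq m r s = concat (map (\<lambda>i. edge_elems m i (s i)) [1..<r+1])"

end

theory Submission
  imports Defs "HOL-Library.Product_Lexorder"  (* orders the monomials, making mpoly an idom *)
begin

(* Each prefix of the sequence generates exactly the joint kernel of a finite family S of
   substitution endomorphisms of Q[x], i.e. the set of P with rho P = 0 for all rho in S.
   As Q[x] is a domain, an element f with rho f <> 0 for all rho in S is then a nonzerodivisor
   modulo the prefix, and the quotient is nonzero as long as S is nonempty.
   Appending a linear element x_y - g with g free of x_y replaces every rho by rho o (x_y := g),
   because P - P(x_y := g) is divisible by x_y - g.  Appending the pair x + y - a - b, xy - ab
   replaces every rho by the two substitutions (x, y) := (a, b) and (x, y) := (b, a); this is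
   two-point interpolation in x and needs rho (b - a) <> 0.
   Along the sequence each rho fixes the variables not used yet and sends the most recently used
   variable of every column to distinct variables of row 0, which makes all the required images
   nonzero. *)

definition var :: "nat \<times> nat \<Rightarrow> mpoly" where
  "var v = Poly_Mapping.single (Poly_Mapping.single v 1) 1"

lemma Var_eq_var: "Var i j = var (i, j)"
  by (simp add: Var_def var_def)

abbreviation poly_const :: "rat \<Rightarrow> mpoly" where
  "poly_const c \<equiv> Poly_Mapping.single 0 c"

definition subst_monomial :: "(nat \<times> nat \<Rightarrow> mpoly) \<Rightarrow> ((nat \<times> nat) \<Rightarrow>\<^sub>0 nat) \<Rightarrow> mpoly" where
  "subst_monomial \<rho> mon = (\<Prod>v\<in>Poly_Mapping.keys mon. \<rho> v ^ Poly_Mapping.lookup mon v)"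

definition subst :: "(nat \<times> nat \<Rightarrow> mpoly) \<Rightarrow> mpoly \<Rightarrow> mpoly" where
  "subst \<rho> P =
     (\<Sum>mon\<in>Poly_Mapping.keys P. poly_const (Poly_Mapping.lookup P mon) * subst_monomial \<rho> mon)"

lemma subst_monomial_superset:
  assumes "finite K" "Poly_Mapping.keys mon \<subseteq> K"
  shows "subst_monomial \<rho> mon = (\<Prod>v\<in>K. \<rho> v ^ Poly_Mapping.lookup mon v)"
  unfolding subst_monomial_def
  by (rule prod.mono_neutral_left) (use assms in \<open>auto simp: in_keys_iff\<close>)

lemma subst_monomial_0 [simp]: "subst_monomial \<rho> 0 = 1"
  by (simp add: subst_monomial_def)

lemma subst_monomial_add: "subst_monomial \<rho> (a + b) = subst_monomial \<rho> a * subst_monomial \<rho> b"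
proof -
  let ?K = "Poly_Mapping.keys a \<union> Poly_Mapping.keys b"
  have "subst_monomial \<rho> (a + b) = (\<Prod>v\<in>?K. \<rho> v ^ Poly_Mapping.lookup (a + b) v)"
    by (rule subst_monomial_superset) (auto dest: keys_add[THEN subsetD])
  also have "\<dots> = (\<Prod>v\<in>?K. \<rho> v ^ Poly_Mapping.lookup a v * \<rho> v ^ Poly_Mapping.lookup b v)"
    by (simp add: lookup_add power_add)
  also have "\<dots> = subst_monomial \<rho> a * subst_monomial \<rho> b"
    by (simp add: prod.distrib subst_monomial_superset[of ?K])
  finally show ?thesis .
qed

lemma subst_superset:
  assumes "finite K" "Poly_Mapping.keys P \<subseteq> K"
  shows "subst \<rho> P = (\<Sum>mon\<in>K. poly_const (Poly_Mapping.lookup P mon) * subst_monomial \<rho> mon)"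
  unfolding subst_def
  by (rule sum.mono_neutral_left) (use assms in \<open>auto simp: in_keys_iff\<close>)

lemma subst_0 [simp]: "subst \<rho> 0 = 0"
  by (simp add: subst_def)

lemma subst_add: "subst \<rho> (P + Q) = subst \<rho> P + subst \<rho> Q"
proof -
  let ?K = "Poly_Mapping.keys P \<union> Poly_Mapping.keys Q"
  have "subst \<rho> (P + Q) =
      (\<Sum>mon\<in>?K. poly_const (Poly_Mapping.lookup (P + Q) mon) * subst_monomial \<rho> mon)"
    by (rule subst_superset) (auto dest: keys_add[THEN subsetD])
  also have "\<dots> = subst \<rho> P + subst \<rho> Q"
    by (simp add: lookup_add single_add distrib_right sum.distrib subst_superset[of ?K])
  finally show ?thesis .
qed

lemma subst_uminus: "subst \<rho> (- P) = - subst \<rho> P"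
  using subst_add[of \<rho> P "- P"] by (simp add: add.inverse_unique)

lemma subst_diff: "subst \<rho> (P - Q) = subst \<rho> P - subst \<rho> Q"
  using subst_add[of \<rho> P "- Q"] by (simp add: subst_uminus)

lemma subst_sum: "subst \<rho> (sum f K) = (\<Sum>k\<in>K. subst \<rho> (f k))"
  by (induction K rule: infinite_finite_induct) (auto simp: subst_add)

lemma subst_single:
  "subst \<rho> (Poly_Mapping.single mon c) = poly_const c * subst_monomial \<rho> mon"
  by (subst subst_superset[of "{mon}"]) (auto simp: lookup_single)

lemma sum_single_lookup:
  "(\<Sum>k\<in>Poly_Mapping.keys p. Poly_Mapping.single k (Poly_Mapping.lookup p k)) = p"
  by (rule poly_mapping_eqI) (simp add: lookup_sum lookup_single when_def in_keys_iff)

lemma poly_const_mult: "poly_const (c * d) = poly_const c * poly_const d"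
  by (simp add: mult_single)

lemma subst_single_mult:
  "subst \<rho> (Poly_Mapping.single mon c * Q) = poly_const c * subst_monomial \<rho> mon * subst \<rho> Q"
proof -
  have "Poly_Mapping.single mon c * Q = (\<Sum>n\<in>Poly_Mapping.keys Q.
          Poly_Mapping.single (mon + n) (c * Poly_Mapping.lookup Q n))"
    by (subst (1) sum_single_lookup[of Q, symmetric]) (simp add: sum_distrib_left mult_single)
  then have "subst \<rho> (Poly_Mapping.single mon c * Q) = (\<Sum>n\<in>Poly_Mapping.keys Q.
      poly_const (c * Poly_Mapping.lookup Q n) * subst_monomial \<rho> (mon + n))"
    by (simp add: subst_sum subst_single)
  also have "\<dots> = (\<Sum>n\<in>Poly_Mapping.keys Q. poly_const c * subst_monomial \<rho> mon *
      (poly_const (Poly_Mapping.lookup Q n) * subst_monomial \<rho> n))"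
    by (simp add: subst_monomial_add poly_const_mult mult_ac)
  finally show ?thesis
    by (simp add: subst_def sum_distrib_left)
qed

lemma subst_mult: "subst \<rho> (P * Q) = subst \<rho> P * subst \<rho> Q"
proof -
  have "subst \<rho> (P * Q) = subst \<rho> ((\<Sum>mon\<in>Poly_Mapping.keys P.
          Poly_Mapping.single mon (Poly_Mapping.lookup P mon)) * Q)"
    by (simp only: sum_single_lookup)
  also have "\<dots> = (\<Sum>mon\<in>Poly_Mapping.keys P.
      poly_const (Poly_Mapping.lookup P mon) * subst_monomial \<rho> mon * subst \<rho> Q)"
    by (simp add: sum_distrib_right subst_sum subst_single_mult)
  finally show ?thesis
    by (simp add: subst_def sum_distrib_right)
qed

lemma subst_var [simp]: "subst \<rho> (var v) = \<rho> v"
  by (simp add: var_def subst_single subst_monomial_def)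

lemma subst_const [simp]: "subst \<rho> (poly_const c) = poly_const c"
  by (simp add: subst_single)

lemma subst_1 [simp]: "subst \<rho> 1 = 1"
  using subst_const[of \<rho> 1] by simp

lemma var_power: "var v ^ n = Poly_Mapping.single (Poly_Mapping.single v n) 1"
  by (induction n) (auto simp: var_def mult_single single_add[symmetric])

lemma prod_var_power:
  "finite K \<Longrightarrow>
    (\<Prod>v\<in>K. var v ^ f v) = Poly_Mapping.single (\<Sum>v\<in>K. Poly_Mapping.single v (f v)) 1"
  by (induction K rule: finite_induct) (auto simp: var_power mult_single)

lemma subst_var_self [simp]: "subst var P = P"
proof -
  have "subst_monomial var mon = Poly_Mapping.single mon 1" for mon
    by (simp add: subst_monomial_def prod_var_power sum_single_lookup)
  then show ?thesis
    by (simp add: subst_def mult_single sum_single_lookup)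
qed

lemma poly_ring_in_add: "p \<in> poly_ring_in W \<Longrightarrow> q \<in> poly_ring_in W \<Longrightarrow> p + q \<in> poly_ring_in W"
  unfolding poly_ring_in_def by (auto dest!: keys_add[THEN subsetD])

lemma poly_ring_in_uminus: "p \<in> poly_ring_in W \<Longrightarrow> - p \<in> poly_ring_in W"
  unfolding poly_ring_in_def by simp

lemma poly_ring_in_diff: "p \<in> poly_ring_in W \<Longrightarrow> q \<in> poly_ring_in W \<Longrightarrow> p - q \<in> poly_ring_in W"
  using poly_ring_in_add[of p W "- q"] by (simp add: poly_ring_in_uminus)

lemma poly_ring_in_mult:
  assumes "p \<in> poly_ring_in W" "q \<in> poly_ring_in W"
  shows "p * q \<in> poly_ring_in W"
  unfolding poly_ring_in_def
proof (intro CollectI ballI)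
  fix mon assume "mon \<in> Poly_Mapping.keys (p * q)"
  then obtain a b where "mon = a + b" "a \<in> Poly_Mapping.keys p" "b \<in> Poly_Mapping.keys q"
    using keys_mult[of p q] by blast
  then show "Poly_Mapping.keys mon \<subseteq> W"
    using assms keys_add[of a b] unfolding poly_ring_in_def by blast
qed

lemma var_in_poly_ring_in: "v \<in> W \<Longrightarrow> var v \<in> poly_ring_in W"
  unfolding poly_ring_in_def var_def by simp

lemma poly_const_in_poly_ring_in [simp]: "poly_const c \<in> poly_ring_in W"
  unfolding poly_ring_in_def by (cases "c = 0") auto

lemma zero_in_poly_ring_in [simp]: "0 \<in> poly_ring_in W"
  using poly_const_in_poly_ring_in[of 0 W] by simp

lemma one_in_poly_ring_in [simp]: "1 \<in> poly_ring_in W"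
  using poly_const_in_poly_ring_in[of 1 W] by simp

lemmas poly_ring_in_intros =
  poly_ring_in_add poly_ring_in_uminus poly_ring_in_diff poly_ring_in_mult var_in_poly_ring_in

lemma poly_ring_in_sum:
  assumes "\<And>k. k \<in> K \<Longrightarrow> f k \<in> poly_ring_in W"
  shows "sum f K \<in> poly_ring_in W"
  using assms by (induction K rule: infinite_finite_induct) (auto intro: poly_ring_in_add)

lemma poly_ring_in_mono: "W \<subseteq> W' \<Longrightarrow> p \<in> poly_ring_in W \<Longrightarrow> p \<in> poly_ring_in W'"
  unfolding poly_ring_in_def by blast

lemma poly_ring_in_UNIV [simp]: "p \<in> poly_ring_in UNIV"
  unfolding poly_ring_in_def by blast

lemma poly_ring_in_induct [consumes 1, case_names const var add mult]:
  assumes "P \<in> poly_ring_in W"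
    and const: "\<And>c. Q (poly_const c)"
    and var: "\<And>v. v \<in> W \<Longrightarrow> Q (var v)"
    and add: "\<And>p q. p \<in> poly_ring_in W \<Longrightarrow> q \<in> poly_ring_in W \<Longrightarrow> Q p \<Longrightarrow> Q q \<Longrightarrow> Q (p + q)"
    and mult: "\<And>p q. p \<in> poly_ring_in W \<Longrightarrow> q \<in> poly_ring_in W \<Longrightarrow> Q p \<Longrightarrow> Q q \<Longrightarrow> Q (p * q)"
  shows "Q P"
proof -
  let ?Q = "\<lambda>p. p \<in> poly_ring_in W \<and> Q p"
  have Q0: "?Q 0" and Q1: "?Q 1"
    using const[of 0] const[of 1] by simp_all
  have sum: "(\<And>k. k \<in> K \<Longrightarrow> ?Q (f k)) \<Longrightarrow> ?Q (sum f K)" for K and f :: "_ \<Rightarrow> mpoly"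
    by (induction K rule: infinite_finite_induct) (auto simp: Q0 add poly_ring_in_add)
  have prod: "(\<And>k. k \<in> K \<Longrightarrow> ?Q (f k)) \<Longrightarrow> ?Q (prod f K)" for K and f :: "_ \<Rightarrow> mpoly"
    by (induction K rule: infinite_finite_induct) (auto simp: Q1 mult poly_ring_in_mult)
  have power: "v \<in> W \<Longrightarrow> ?Q (var v ^ n)" for v n
    by (induction n) (auto simp: Q1 mult var poly_ring_in_mult var_in_poly_ring_in)
  have "?Q (subst var P)"
    unfolding subst_def subst_monomial_def
  proof (intro sum)
    fix mon assume mon: "mon \<in> Poly_Mapping.keys P"
    have "Poly_Mapping.keys mon \<subseteq> W"
      using mon assms(1) unfolding poly_ring_in_def by blast
    then have "?Q (\<Prod>v\<in>Poly_Mapping.keys mon. var v ^ Poly_Mapping.lookup mon v)"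
      by (intro prod power) blast
    then show "?Q (poly_const (Poly_Mapping.lookup P mon) *
        (\<Prod>v\<in>Poly_Mapping.keys mon. var v ^ Poly_Mapping.lookup mon v))"
      by (simp add: mult const poly_ring_in_mult)
  qed
  then show ?thesis by simp
qed

lemma subst_eq_self:
  assumes "P \<in> poly_ring_in W" "\<And>v. v \<in> W \<Longrightarrow> \<theta> v = var v"
  shows "subst \<theta> P = P"
  using assms(1) by (induction rule: poly_ring_in_induct) (auto simp: assms(2) subst_add subst_mult)

lemma subst_upd_irrelevant:
  assumes "P \<in> poly_ring_in (- {y})"
  shows "subst (\<theta>(y := c)) P = subst \<theta> P"
  using assms by (induction rule: poly_ring_in_induct) (auto simp: subst_add subst_mult)

lemma subst_in_poly_ring_in:
  assumes "P \<in> poly_ring_in W" "\<And>v. v \<in> W \<Longrightarrow> \<theta> v \<in> poly_ring_in W'"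
  shows "subst \<theta> P \<in> poly_ring_in W'"
  using assms(1)
  by (induction rule: poly_ring_in_induct) (auto simp: assms(2) subst_add subst_mult poly_ring_in_intros)

lemma subst_compose: "subst (subst \<rho> \<circ> \<theta>) P = subst \<rho> (subst \<theta> P)"
  using poly_ring_in_UNIV[of P] by (induction rule: poly_ring_in_induct) (auto simp: subst_add subst_mult)

lemma subst_upd_divisible:
  assumes "P \<in> poly_ring_in W" "y \<in> W" "g \<in> poly_ring_in W"
  shows "\<exists>Q \<in> poly_ring_in W. P - subst (var(y := g)) P = (var y - g) * Q"
proof -
  define t where "t = var(y := g)"
  have t_in: "subst t q \<in> poly_ring_in W" if "q \<in> poly_ring_in W" for q
    using that assms(2,3) by (auto intro!: subst_in_poly_ring_in simp: t_def var_in_poly_ring_in)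
  have "\<exists>Q \<in> poly_ring_in W. P - subst t P = (var y - g) * Q"
    using assms(1)
  proof (induction rule: poly_ring_in_induct)
    case (const c)
    show ?case by (rule bexI[of _ 0]) simp_all
  next
    case (var v)
    show ?case
    proof (cases "v = y")
      case True
      then show ?thesis by (intro bexI[of _ 1]) (simp_all add: t_def)
    next
      case False
      then show ?thesis by (intro bexI[of _ 0]) (simp_all add: t_def)
    qed
  next
    case (add p q)
    then obtain Qp Qq where Qp: "Qp \<in> poly_ring_in W" "p - subst t p = (var y - g) * Qp"
      and Qq: "Qq \<in> poly_ring_in W" "q - subst t q = (var y - g) * Qq"
      by blast
    have "p + q - subst t (p + q) = (p - subst t p) + (q - subst t q)"
      by (simp add: subst_add algebra_simps)
    also have "\<dots> = (var y - g) * (Qp + Qq)"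
      unfolding Qp(2) Qq(2) by (simp add: distrib_left)
    finally show ?case
      using Qp(1) Qq(1) by (intro bexI[of _ "Qp + Qq"] poly_ring_in_add)
  next
    case (mult p q)
    then obtain Qp Qq where Qp: "Qp \<in> poly_ring_in W" "p - subst t p = (var y - g) * Qp"
      and Qq: "Qq \<in> poly_ring_in W" "q - subst t q = (var y - g) * Qq"
      by blast
    have "p * q - subst t (p * q) = p * (q - subst t q) + subst t q * (p - subst t p)"
      by (simp add: subst_mult algebra_simps)
    also have "\<dots> = (var y - g) * (p * Qq + subst t q * Qp)"
      unfolding Qp(2) Qq(2) by (simp add: algebra_simps)
    finally show ?case
      using mult.hyps Qp(1) Qq(1) t_in[of q]
      by (intro bexI[of _ "p * Qq + subst t q * Qp"] poly_ring_in_add poly_ring_in_mult)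
  qed
  then show ?thesis
    by (simp add: t_def)
qed

lemma var_minus_nonzero:
  assumes "c \<in> poly_ring_in (- {v})"
  shows "var v - c \<noteq> 0"
proof
  have "Poly_Mapping.single v 1 \<notin> Poly_Mapping.keys c"
    using assms unfolding poly_ring_in_def by auto
  then have "Poly_Mapping.lookup c (Poly_Mapping.single v 1) = 0"
    by (simp add: in_keys_iff)
  moreover assume "var v - c = 0"
  then have "Poly_Mapping.lookup (var v - c) (Poly_Mapping.single v 1) = 0"
    by simp
  ultimately show False
    by (simp add: var_def lookup_minus)
qed

lemma ideal_in_Nil: "ideal_in (poly_ring_in V) [] = {0}"
  unfolding ideal_in_def by (auto intro!: exI[of _ "\<lambda>_. 0"])

lemma ideal_in_snoc:
  "ideal_in A (fs @ [f]) = {p + c * f | p c. p \<in> ideal_in A fs \<and> c \<in> A}"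
proof (intro set_eqI iffI)
  fix x assume "x \<in> ideal_in A (fs @ [f])"
  then obtain c where c: "\<forall>k. c k \<in> A" and x: "x = (\<Sum>k<length (fs @ [f]). c k * (fs @ [f]) ! k)"
    unfolding ideal_in_def by blast
  have "x = (\<Sum>k<length fs. c k * fs ! k) + c (length fs) * f"
    unfolding x by (simp add: nth_append)
  moreover have "(\<Sum>k<length fs. c k * fs ! k) \<in> ideal_in A fs"
    unfolding ideal_in_def using c by blast
  ultimately show "x \<in> {p + c * f | p c. p \<in> ideal_in A fs \<and> c \<in> A}"
    using c by blast
next
  fix x assume "x \<in> {p + c * f | p c. p \<in> ideal_in A fs \<and> c \<in> A}"
  then obtain p d where p: "p \<in> ideal_in A fs" and d: "d \<in> A" and x: "x = p + d * f"
    by blast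
  from p obtain c where c: "\<forall>k. c k \<in> A" and pc: "p = (\<Sum>k<length fs. c k * fs ! k)"
    unfolding ideal_in_def by blast
  have "x = (\<Sum>k<length (fs @ [f]). (c(length fs := d)) k * (fs @ [f]) ! k)"
    unfolding x pc by (simp add: nth_append)
  moreover have "\<forall>k. (c(length fs := d)) k \<in> A"
    using c d by simp
  ultimately show "x \<in> ideal_in A (fs @ [f])"
    unfolding ideal_in_def by blast
qed

lemma ideal_in_add:
  assumes "p \<in> ideal_in (poly_ring_in V) fs" "q \<in> ideal_in (poly_ring_in V) fs"
  shows "p + q \<in> ideal_in (poly_ring_in V) fs"
proof -
  from assms obtain c d where c: "\<forall>k. c k \<in> poly_ring_in V" "p = (\<Sum>k<length fs. c k * fs ! k)"
    and d: "\<forall>k. d k \<in> poly_ring_in V" "q = (\<Sum>k<length fs. d k * fs ! k)"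
    unfolding ideal_in_def by blast
  have "p + q = (\<Sum>k<length fs. (c k + d k) * fs ! k)"
    unfolding c d by (simp add: distrib_right sum.distrib)
  then show ?thesis
    using c(1) d(1) unfolding ideal_in_def by (auto intro!: exI[of _ "\<lambda>k. c k + d k"] poly_ring_in_add)
qed

lemma ideal_in_mult:
  assumes "a \<in> poly_ring_in V" "p \<in> ideal_in (poly_ring_in V) fs"
  shows "a * p \<in> ideal_in (poly_ring_in V) fs"
proof -
  from assms obtain c where c: "\<forall>k. c k \<in> poly_ring_in V" "p = (\<Sum>k<length fs. c k * fs ! k)"
    unfolding ideal_in_def by blast
  have "a * p = (\<Sum>k<length fs. (a * c k) * fs ! k)"
    unfolding c by (simp add: sum_distrib_left mult.assoc)
  then show ?thesis
    using c(1) assms(1) unfolding ideal_in_def by (auto intro!: exI[of _ "\<lambda>k. a * c k"] poly_ring_in_mult)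
qed

lemma ideal_in_generator:
  assumes "f \<in> set fs"
  shows "f \<in> ideal_in (poly_ring_in V) fs"
proof -
  obtain k0 where k0: "k0 < length fs" "f = fs ! k0"
    using assms by (auto simp: in_set_conv_nth)
  have "(\<Sum>k<length fs. (if k = k0 then 1 else 0) * fs ! k) =
      (\<Sum>k<length fs. if k = k0 then fs ! k0 else 0)"
    by (rule sum.cong) auto
  then have "f = (\<Sum>k<length fs. (if k = k0 then 1 else 0) * fs ! k)"
    using k0 by simp
  then show ?thesis
    unfolding ideal_in_def by (auto intro!: exI[of _ "\<lambda>k. if k = k0 then 1 else 0"])
qed

definition joint_kernel :: "(nat \<times> nat) set \<Rightarrow> (nat \<times> nat \<Rightarrow> mpoly) set \<Rightarrow> mpoly set" where
  "joint_kernel V S = {P \<in> poly_ring_in V. \<forall>\<rho>\<in>S. subst \<rho> P = 0}"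

lemma joint_kernel_compose_iff:
  "P \<in> joint_kernel V ((\<lambda>\<rho>. subst \<rho> \<circ> \<theta>) ` S) \<longleftrightarrow>
     P \<in> poly_ring_in V \<and> (\<forall>\<rho>\<in>S. subst \<rho> (subst \<theta> P) = 0)"
  by (auto simp: joint_kernel_def subst_compose)

lemma joint_kernel_Un: "joint_kernel V (S \<union> T) = joint_kernel V S \<inter> joint_kernel V T"
  by (auto simp: joint_kernel_def)

lemma ideal_in_subset_joint_kernel:
  assumes "set fs \<subseteq> joint_kernel V S"
  shows "ideal_in (poly_ring_in V) fs \<subseteq> joint_kernel V S"
proof
  fix P assume "P \<in> ideal_in (poly_ring_in V) fs"
  then obtain c where c: "\<forall>k. c k \<in> poly_ring_in V" and P: "P = (\<Sum>k<length fs. c k * fs ! k)"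
    unfolding ideal_in_def by blast
  have fs: "fs ! k \<in> poly_ring_in V" "\<forall>\<rho>\<in>S. subst \<rho> (fs ! k) = 0" if "k < length fs" for k
    using assms nth_mem[OF that] by (auto simp: joint_kernel_def)
  show "P \<in> joint_kernel V S"
    unfolding joint_kernel_def P
    using c fs by (auto intro!: poly_ring_in_sum poly_ring_in_mult simp: subst_sum subst_mult)
qed

lemma set_subset_joint_kernel:
  assumes "ideal_in (poly_ring_in V) fs = joint_kernel V S"
  shows "set fs \<subseteq> joint_kernel V S"
  using ideal_in_generator[of _ fs V] assms by blast

definition regular_kernel_seq :: "(nat \<times> nat) set \<Rightarrow> (nat \<times> nat \<Rightarrow> mpoly) set \<Rightarrow> mpoly list \<Rightarrow> bool" where
  "regular_kernel_seq V S fs \<longleftrightarrow>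
     regular_seq_in (poly_ring_in V) fs \<and> ideal_in (poly_ring_in V) fs = joint_kernel V S"

lemma regular_kernel_seq_Nil: "regular_kernel_seq V {var} []"
  by (auto simp: regular_kernel_seq_def regular_seq_in_def ideal_in_Nil joint_kernel_def)

lemma regular_kernel_seq_nonempty: "regular_kernel_seq V S fs \<Longrightarrow> S \<noteq> {}"
  by (auto simp: regular_kernel_seq_def regular_seq_in_def joint_kernel_def)

lemma regular_kernel_seq_snoc:
  assumes rk: "regular_kernel_seq V S fs" and f: "f \<in> poly_ring_in V"
    and nz: "\<And>\<rho>. \<rho> \<in> S \<Longrightarrow> subst \<rho> f \<noteq> 0"
    and "S' \<noteq> {}" and ker: "ideal_in (poly_ring_in V) (fs @ [f]) = joint_kernel V S'"
  shows "regular_kernel_seq V S' (fs @ [f])"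
proof -
  have reg: "regular_seq_in (poly_ring_in V) fs" and I: "ideal_in (poly_ring_in V) fs = joint_kernel V S"
    using rk by (auto simp: regular_kernel_seq_def)
  have nzd: "a \<in> ideal_in (poly_ring_in V) fs"
    if a: "a \<in> poly_ring_in V" "a * f \<in> ideal_in (poly_ring_in V) fs" for a
  proof -
    have "subst \<rho> a = 0" if "\<rho> \<in> S" for \<rho>
      using a(2) nz[OF that] that by (auto simp: I joint_kernel_def subst_mult)
    then show ?thesis
      using a(1) by (simp add: I joint_kernel_def)
  qed
  have "1 \<notin> ideal_in (poly_ring_in V) (fs @ [f])"
    using \<open>S' \<noteq> {}\<close> by (auto simp: ker joint_kernel_def)
  then show ?thesis
    using reg f nzd
    by (auto simp: regular_kernel_seq_def regular_seq_in_def ker nth_append less_Suc_eq)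
qed

lemma joint_kernel_upd_eq_ideal_in:
  assumes I: "ideal_in (poly_ring_in V) fs = joint_kernel V S" and y: "y \<in> V"
    and g: "g \<in> poly_ring_in V" "g \<in> poly_ring_in (- {y})"
    and fs: "set fs \<subseteq> poly_ring_in (- {y})"
  shows "joint_kernel V ((\<lambda>\<rho>. subst \<rho> \<circ> var(y := g)) ` S) = ideal_in (poly_ring_in V) (fs @ [var y - g])"
    (is "joint_kernel V ?S' = _")
proof -
  let ?t = "var(y := g)"
  have fixed: "subst ?t P = P" if "P \<in> poly_ring_in (- {y})" for P
    using that by (rule subst_eq_self) simp
  have "h \<in> joint_kernel V ?S'" if h: "h \<in> set fs" for h
  proof -
    have "h \<in> joint_kernel V S" "subst ?t h = h"
      using set_subset_joint_kernel[OF I] h fs by (auto intro: fixed)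
    then show ?thesis
      unfolding joint_kernel_compose_iff by (simp add: joint_kernel_def)
  qed
  moreover have "var y - g \<in> joint_kernel V ?S'"
    using y g by (simp add: joint_kernel_compose_iff subst_diff fixed poly_ring_in_intros)
  moreover have "P \<in> ideal_in (poly_ring_in V) (fs @ [var y - g])" if "P \<in> joint_kernel V ?S'" for P
  proof -
    have P: "P \<in> poly_ring_in V" and "\<forall>\<rho>\<in>S. subst \<rho> (subst ?t P) = 0"
      using that by (simp_all add: joint_kernel_compose_iff)
    moreover have "subst ?t P \<in> poly_ring_in V"
      using P y g by (auto intro!: subst_in_poly_ring_in var_in_poly_ring_in)
    ultimately have "subst ?t P \<in> ideal_in (poly_ring_in V) fs"
      by (simp add: I joint_kernel_def)
    moreover obtain Q where "Q \<in> poly_ring_in V" "P - subst ?t P = (var y - g) * Q"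
      using subst_upd_divisible[OF P y g(1)] by blast
    moreover from this(2) have "P = subst ?t P + Q * (var y - g)"
      by algebra
    ultimately show ?thesis
      unfolding ideal_in_snoc by blast
  qed
  ultimately show ?thesis
    using ideal_in_subset_joint_kernel[of "fs @ [var y - g]" V ?S'] by auto
qed

lemma regular_kernel_seq_snoc_linear:
  assumes rk: "regular_kernel_seq V S fs" and y: "y \<in> V"
    and g: "g \<in> poly_ring_in V" "g \<in> poly_ring_in (- {y})"
    and fs: "set fs \<subseteq> poly_ring_in (- {y})"
    and nz: "\<And>\<rho>. \<rho> \<in> S \<Longrightarrow> subst \<rho> (var y - g) \<noteq> 0"
  shows "regular_kernel_seq V ((\<lambda>\<rho>. subst \<rho> \<circ> var(y := g)) ` S) (fs @ [var y - g])"
proof (rule regular_kernel_seq_snoc[OF rk _ nz])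
  show "var y - g \<in> poly_ring_in V"
    using y g by (simp add: poly_ring_in_intros)
  show "(\<lambda>\<rho>. subst \<rho> \<circ> var(y := g)) ` S \<noteq> {}"
    using regular_kernel_seq_nonempty[OF rk] by blast
  have "ideal_in (poly_ring_in V) fs = joint_kernel V S"
    using rk by (simp add: regular_kernel_seq_def)
  from joint_kernel_upd_eq_ideal_in[OF this y g fs]
  show "ideal_in (poly_ring_in V) (fs @ [var y - g]) = joint_kernel V ((\<lambda>\<rho>. subst \<rho> \<circ> var(y := g)) ` S)"
    by simp
qed

lemma two_point_interpolation:
  assumes I: "ideal_in (poly_ring_in V) fs = joint_kernel V S" and x: "x \<in> V"
    and a: "a \<in> poly_ring_in V" "a \<in> poly_ring_in (- {x})"
    and b: "b \<in> poly_ring_in V" "b \<in> poly_ring_in (- {x})"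
    and nz: "\<And>\<rho>. \<rho> \<in> S \<Longrightarrow> subst \<rho> (b - a) \<noteq> 0"
    and R: "R \<in> poly_ring_in V" "subst (var(x := a)) R \<in> joint_kernel V S"
      "subst (var(x := b)) R \<in> joint_kernel V S"
  shows "\<exists>p \<in> ideal_in (poly_ring_in V) fs. \<exists>c \<in> poly_ring_in V.
           R = p + (var x - a) * (var x - b) * c"
proof -
  let ?ta = "var(x := a)" and ?tb = "var(x := b)"
  obtain Q where Q: "Q \<in> poly_ring_in V" "R - subst ?ta R = (var x - a) * Q"
    using subst_upd_divisible[OF R(1) x a(1)] by blast
  obtain Q2 where Q2: "Q2 \<in> poly_ring_in V" "Q - subst ?tb Q = (var x - b) * Q2"
    using subst_upd_divisible[OF Q(1) x b(1)] by blast
  have tbQ: "subst ?tb Q \<in> poly_ring_in V"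
    using Q(1) x b(1) by (auto intro!: subst_in_poly_ring_in var_in_poly_ring_in)
  have "subst ?ta R \<in> poly_ring_in (- {x})"
    using a(2) by (auto intro!: subst_in_poly_ring_in[of _ UNIV] var_in_poly_ring_in)
  then have "subst ?tb (subst ?ta R) = subst ?ta R"
    by (rule subst_eq_self) simp
  moreover have "subst ?tb a = a"
    using a(2) by (rule subst_eq_self) simp
  ultimately have "subst ?tb R - subst ?ta R = (b - a) * subst ?tb Q"
    using arg_cong[OF Q(2), of "subst ?tb"] by (simp add: subst_diff subst_mult)
  then have "subst \<rho> (b - a) * subst \<rho> (subst ?tb Q) =
      subst \<rho> (subst ?tb R) - subst \<rho> (subst ?ta R)" for \<rho>
    by (metis subst_diff subst_mult)
  then have "subst \<rho> (b - a) * subst \<rho> (subst ?tb Q) = 0" if "\<rho> \<in> S" for \<rho>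
    using R(2,3) that by (simp add: joint_kernel_def)
  then have "subst ?tb Q \<in> ideal_in (poly_ring_in V) fs"
    using nz tbQ by (auto simp: I joint_kernel_def)
  moreover have "subst ?ta R \<in> ideal_in (poly_ring_in V) fs"
    using R(2) by (simp add: I)
  ultimately have "subst ?ta R + (var x - a) * subst ?tb Q \<in> ideal_in (poly_ring_in V) fs"
    using x a(1) by (simp add: ideal_in_add ideal_in_mult poly_ring_in_diff var_in_poly_ring_in)
  moreover have "R = subst ?ta R + (var x - a) * subst ?tb Q + (var x - a) * (var x - b) * Q2"
    using Q(2) Q2(2) by algebra
  ultimately show ?thesis
    using Q2(1) by blast
qed

lemma joint_kernel_swap_subset_ideal_in:
  assumes I: "ideal_in (poly_ring_in V) fs = joint_kernel V S"
    and xy: "x \<in> V" "y \<in> V" "x \<noteq> y"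
    and a: "a \<in> poly_ring_in V" "a \<in> poly_ring_in (- {x})"
    and b: "b \<in> poly_ring_in V" "b \<in> poly_ring_in (- {x})"
    and nz: "\<And>\<rho>. \<rho> \<in> S \<Longrightarrow> subst \<rho> (b - a) \<noteq> 0"
  shows "joint_kernel V ((\<lambda>\<rho>. subst \<rho> \<circ> var(x := a, y := b)) ` S \<union>
                          (\<lambda>\<rho>. subst \<rho> \<circ> var(x := b, y := a)) ` S)
         \<subseteq> ideal_in (poly_ring_in V) (fs @ [var x + var y - a - b, var x * var y - a * b])"
proof
  fix P
  assume "P \<in> joint_kernel V ((\<lambda>\<rho>. subst \<rho> \<circ> var(x := a, y := b)) ` S \<union>
                              (\<lambda>\<rho>. subst \<rho> \<circ> var(x := b, y := a)) ` S)"
  then have P: "P \<in> poly_ring_in V"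
    and Pab: "\<forall>\<rho>\<in>S. subst \<rho> (subst (var(x := a, y := b)) P) = 0"
    and Pba: "\<forall>\<rho>\<in>S. subst \<rho> (subst (var(x := b, y := a)) P) = 0"
    by (simp_all add: joint_kernel_Un joint_kernel_compose_iff)
  define t where "t = var(y := a + b - var x)"
  have g: "a + b - var x \<in> poly_ring_in V"
    using a(1) b(1) xy(1) by (intro poly_ring_in_intros)
  have P1: "subst t P \<in> poly_ring_in V"
    using P g by (auto intro!: subst_in_poly_ring_in[where W = V] var_in_poly_ring_in simp: t_def)
  obtain Q0 where Q0: "Q0 \<in> poly_ring_in V" "P - subst t P = (var x + var y - a - b) * Q0"
    using subst_upd_divisible[OF P xy(2) g] by (auto simp: t_def algebra_simps)
  have fix_a: "subst (var(x := c)) a = a" for c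
    using a(2) by (rule subst_eq_self) simp
  have fix_b: "subst (var(x := c)) b = b" for c
    using b(2) by (rule subst_eq_self) simp
  have "subst (var(x := a)) \<circ> t = var(x := a, y := b)" "subst (var(x := b)) \<circ> t = var(x := b, y := a)"
    using xy(3) by (auto simp: fun_eq_iff t_def subst_add subst_diff fix_a fix_b)
  then have "subst (var(x := a)) (subst t P) = subst (var(x := a, y := b)) P"
    and "subst (var(x := b)) (subst t P) = subst (var(x := b, y := a)) P"
    by (metis subst_compose)+
  then have "subst (var(x := a)) (subst t P) \<in> joint_kernel V S"
    and "subst (var(x := b)) (subst t P) \<in> joint_kernel V S"
    using P Pab Pba xy a(1) b(1) by (auto simp: joint_kernel_def intro!: subst_in_poly_ring_in[where W = V] var_in_poly_ring_in)
  then obtain p c where p: "p \<in> ideal_in (poly_ring_in V) fs" and c: "c \<in> poly_ring_in V"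
    and P1_eq: "subst t P = p + (var x - a) * (var x - b) * c"
    using two_point_interpolation[OF I xy(1) a b nz P1] by blast
  \<comment> \<open>\<open>(x - a)(x - b) = x (x + y - a - b) - (x y - a b)\<close>\<close>
  have "P = (p + (var x * c + Q0) * (var x + var y - a - b)) + (- c) * (var x * var y - a * b)"
    using P1_eq Q0(2) by algebra
  moreover have "p + (var x * c + Q0) * (var x + var y - a - b)
      \<in> ideal_in (poly_ring_in V) (fs @ [var x + var y - a - b])"
    using p xy(1) c Q0(1) unfolding ideal_in_snoc by (blast intro: poly_ring_in_intros)
  ultimately have "P \<in> ideal_in (poly_ring_in V) ((fs @ [var x + var y - a - b]) @ [var x * var y - a * b])"
    using c unfolding ideal_in_snoc[of _ "fs @ [var x + var y - a - b]"] by (blast intro: poly_ring_in_intros)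
  then show "P \<in> ideal_in (poly_ring_in V) (fs @ [var x + var y - a - b, var x * var y - a * b])"
    by simp
qed

lemma joint_kernel_swap_eq_ideal_in:
  assumes I: "ideal_in (poly_ring_in V) fs = joint_kernel V S"
    and xy: "x \<in> V" "y \<in> V" "x \<noteq> y"
    and a: "a \<in> poly_ring_in V" "a \<in> poly_ring_in (- {x, y})"
    and b: "b \<in> poly_ring_in V" "b \<in> poly_ring_in (- {x, y})"
    and fs: "set fs \<subseteq> poly_ring_in (- {x, y})"
    and nz: "\<And>\<rho>. \<rho> \<in> S \<Longrightarrow> subst \<rho> (b - a) \<noteq> 0"
  shows "joint_kernel V ((\<lambda>\<rho>. subst \<rho> \<circ> var(x := a, y := b)) ` S \<union>
                          (\<lambda>\<rho>. subst \<rho> \<circ> var(x := b, y := a)) ` S)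
         = ideal_in (poly_ring_in V) (fs @ [var x + var y - a - b, var x * var y - a * b])"
    (is "joint_kernel V ?S2 = ideal_in _ (fs @ [?f1, ?f2])")
proof -
  have fixed: "subst (var(x := c, y := d)) p = p" if "p \<in> poly_ring_in (- {x, y})" for c d p
    using that by (rule subst_eq_self) simp
  have kernel_iff: "h \<in> joint_kernel V ?S2 \<longleftrightarrow> h \<in> poly_ring_in V \<and>
      (\<forall>\<rho>\<in>S. subst \<rho> (subst (var(x := a, y := b)) h) = 0 \<and>
               subst \<rho> (subst (var(x := b, y := a)) h) = 0)" for h
    unfolding joint_kernel_Un Int_iff joint_kernel_compose_iff by blast
  have "subst (var(x := c, y := d)) ?f1 = c + d - a - b"
    "subst (var(x := c, y := d)) ?f2 = c * d - a * b" for c d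
    using xy(3) by (simp_all add: subst_add subst_diff subst_mult fixed a(2) b(2))
  moreover have "?f1 \<in> poly_ring_in V" "?f2 \<in> poly_ring_in V"
    using xy a(1) b(1) by (auto intro!: poly_ring_in_intros)
  ultimately have "?f1 \<in> joint_kernel V ?S2" "?f2 \<in> joint_kernel V ?S2"
    unfolding kernel_iff by (simp_all add: mult.commute)
  moreover have "h \<in> joint_kernel V ?S2" if h: "h \<in> set fs" for h
  proof -
    have "h \<in> joint_kernel V S" "h \<in> poly_ring_in (- {x, y})"
      using set_subset_joint_kernel[OF I] fs h by auto
    then show ?thesis
      unfolding kernel_iff by (simp add: fixed joint_kernel_def)
  qed
  moreover have "a \<in> poly_ring_in (- {x})" "b \<in> poly_ring_in (- {x})"
    using a(2) b(2) poly_ring_in_mono[of "- {x, y}" "- {x}"] by auto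
  ultimately show ?thesis
    using ideal_in_subset_joint_kernel[of "fs @ [?f1, ?f2]" V ?S2]
      joint_kernel_swap_subset_ideal_in[OF I xy a(1) _ b(1) _ nz]
    by auto
qed

lemma regular_kernel_seq_snoc_quadratic:
  assumes rk: "regular_kernel_seq V S fs" and xy: "x \<in> V" "y \<in> V" "x \<noteq> y"
    and a: "a \<in> poly_ring_in V" "a \<in> poly_ring_in (- {x, y})"
    and b: "b \<in> poly_ring_in V" "b \<in> poly_ring_in (- {x, y})"
    and fs: "set fs \<subseteq> poly_ring_in (- {x, y})"
    and nz_sum: "\<And>\<rho>. \<rho> \<in> S \<Longrightarrow> subst \<rho> (var x + var y - a - b) \<noteq> 0"
    and nz_a: "\<And>\<rho>. \<rho> \<in> S \<Longrightarrow> subst \<rho> (var x - a) \<noteq> 0"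
    and nz_b: "\<And>\<rho>. \<rho> \<in> S \<Longrightarrow> subst \<rho> (var x - b) \<noteq> 0"
    and nz_ba: "\<And>\<rho>. \<rho> \<in> S \<Longrightarrow> subst \<rho> (b - a) \<noteq> 0"
  shows "regular_kernel_seq V
           ((\<lambda>\<rho>. subst \<rho> \<circ> var(x := a, y := b)) ` S \<union> (\<lambda>\<rho>. subst \<rho> \<circ> var(x := b, y := a)) ` S)
           (fs @ [var x + var y - a - b, var x * var y - a * b])"
    (is "regular_kernel_seq V ?S2 (fs @ [?f1, ?f2])")
proof -
  let ?g = "a + b - var x"
  have I: "ideal_in (poly_ring_in V) fs = joint_kernel V S"
    using rk by (simp add: regular_kernel_seq_def)
  have avoid_y: "p \<in> poly_ring_in (- {y})" if "p \<in> poly_ring_in (- {x, y})" for p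
    using that by (auto intro: poly_ring_in_mono[of "- {x, y}"])
  have g: "?g \<in> poly_ring_in V" "?g \<in> poly_ring_in (- {y})"
    using a(1) b(1) avoid_y[OF a(2)] avoid_y[OF b(2)] xy by (auto intro!: poly_ring_in_intros)
  have f1_eq: "var y - ?g = ?f1"
    by (simp add: algebra_simps)
  have "regular_kernel_seq V ((\<lambda>\<rho>. subst \<rho> \<circ> var(y := ?g)) ` S) (fs @ [var y - ?g])"
    by (rule regular_kernel_seq_snoc_linear[OF rk xy(2) g]) (use fs avoid_y nz_sum in \<open>auto simp: f1_eq\<close>)
  then have rk1: "regular_kernel_seq V ((\<lambda>\<rho>. subst \<rho> \<circ> var(y := ?g)) ` S) (fs @ [?f1])"
    by (simp only: f1_eq)
  have nz2: "subst \<rho>1 ?f2 \<noteq> 0" if \<rho>1: "\<rho>1 \<in> (\<lambda>\<rho>. subst \<rho> \<circ> var(y := ?g)) ` S" for \<rho>1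
  proof -
    obtain \<rho> where \<rho>: "\<rho> \<in> S" "\<rho>1 = subst \<rho> \<circ> var(y := ?g)"
      using \<rho>1 by blast
    have "subst (var(y := ?g)) a = a" "subst (var(y := ?g)) b = b"
      using subst_upd_irrelevant[OF avoid_y[OF a(2)]] subst_upd_irrelevant[OF avoid_y[OF b(2)]]
      by simp_all
    then have "subst (var(y := ?g)) ?f2 = - ((var x - a) * (var x - b))"
      using xy(3) by (simp add: subst_diff subst_mult algebra_simps)
    then show ?thesis
      using \<rho> nz_a nz_b by (simp add: subst_compose subst_uminus subst_mult)
  qed
  have "?f2 \<in> poly_ring_in V"
    using xy a(1) b(1) by (auto intro!: poly_ring_in_intros)
  moreover have "ideal_in (poly_ring_in V) ((fs @ [?f1]) @ [?f2]) = joint_kernel V ?S2"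
    using joint_kernel_swap_eq_ideal_in[OF I xy a b fs nz_ba] by simp
  ultimately show ?thesis
    using regular_kernel_seq_nonempty[OF rk] regular_kernel_seq_snoc[OF rk1 _ nz2] by auto
qed

(* processed i C: the variables of the elements listed for rows below i and for the columns C of
   row i; the latest variable of column j is then (i, j) if j is in C and (i - 1, j) otherwise. *)
definition processed :: "nat \<Rightarrow> nat set \<Rightarrow> (nat \<times> nat) set" where
  "processed i C = {v. fst v < i} \<union> {i} \<times> C"

definition tracks_frontier :: "nat \<Rightarrow> nat \<Rightarrow> nat set \<Rightarrow> (nat \<times> nat \<Rightarrow> mpoly) \<Rightarrow> bool" where
  "tracks_frontier m i C \<rho> \<longleftrightarrow>
     (\<forall>v. v \<notin> processed i C \<longrightarrow> \<rho> v = var v) \<and>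
     (\<exists>\<pi>. inj_on \<pi> {1..m} \<and>
        (\<forall>j\<in>{1..m}. \<rho> (if j \<in> C then (i, j) else (i - 1, j)) = var (0, \<pi> j)))"

definition frontier_presented :: "nat \<Rightarrow> nat \<Rightarrow> nat \<Rightarrow> nat set \<Rightarrow> mpoly list \<Rightarrow> bool" where
  "frontier_presented m r i C fs \<longleftrightarrow>
     set fs \<subseteq> poly_ring_in (processed i C) \<and>
     (\<exists>S. regular_kernel_seq ({0..r} \<times> {1..m}) S fs \<and> (\<forall>\<rho>\<in>S. tracks_frontier m i C \<rho>))"

lemma tracks_frontierE:
  assumes "tracks_frontier m i C \<rho>"
  obtains \<pi> where "inj_on \<pi> {1..m}" "\<And>v. v \<notin> processed i C \<Longrightarrow> \<rho> v = var v"
    "\<And>j. j \<in> {1..m} \<Longrightarrow> \<rho> (if j \<in> C then (i, j) else (i - 1, j)) = var (0, \<pi> j)"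
  using assms unfolding tracks_frontier_def by auto

lemma frontier_presented_start: "frontier_presented m r 1 {} []"
proof -
  have "tracks_frontier m 1 {} var"
    unfolding tracks_frontier_def by (auto intro!: exI[of _ id])
  then show ?thesis
    unfolding frontier_presented_def using regular_kernel_seq_Nil by auto
qed

lemma tracks_frontier_insert:
  assumes tr: "tracks_frontier m i C \<rho>" and i: "1 \<le> i" and j: "j \<in> {1..m}" "j \<notin> C"
  shows "subst \<rho> (var (i, j) - var (i - 1, j)) \<noteq> 0"
    and "tracks_frontier m i (insert j C) (subst \<rho> \<circ> var((i, j) := var (i - 1, j)))"
proof -
  obtain \<pi> where \<pi>: "inj_on \<pi> {1..m}" and untouched: "\<And>v. v \<notin> processed i C \<Longrightarrow> \<rho> v = var v"
    and frontier: "\<And>j. j \<in> {1..m} \<Longrightarrow> \<rho> (if j \<in> C then (i, j) else (i - 1, j)) = var (0, \<pi> j)"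
    using tracks_frontierE[OF tr] by blast
  have "\<rho> (i - 1, j) = var (0, \<pi> j)" "\<rho> (i, j) = var (i, j)"
    using frontier[OF j(1)] untouched[of "(i, j)"] j(2) by (simp_all add: processed_def)
  moreover have "var (i, j) - var (0, \<pi> j) \<noteq> 0"
    using i by (intro var_minus_nonzero var_in_poly_ring_in) simp
  ultimately show "subst \<rho> (var (i, j) - var (i - 1, j)) \<noteq> 0"
    by (simp add: subst_diff)
  show "tracks_frontier m i (insert j C) (subst \<rho> \<circ> var((i, j) := var (i - 1, j)))"
    unfolding tracks_frontier_def
  proof (intro conjI exI[of _ \<pi>] \<pi> ballI allI impI)
    fix v assume "v \<notin> processed i (insert j C)"
    then show "(subst \<rho> \<circ> var((i, j) := var (i - 1, j))) v = var v"
      using untouched by (auto simp: processed_def)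
  next
    fix j' assume j': "j' \<in> {1..m}"
    show "(subst \<rho> \<circ> var((i, j) := var (i - 1, j))) (if j' \<in> insert j C then (i, j') else (i - 1, j')) =
        var (0, \<pi> j')"
      using frontier[OF j'] frontier[OF j(1)] j i by (cases "j' = j") auto
  qed
qed

lemma frontier_presented_linear:
  assumes fp: "frontier_presented m r i C fs" and i: "1 \<le> i" "i \<le> r" and j: "j \<in> {1..m}" "j \<notin> C"
  shows "frontier_presented m r i (insert j C) (fs @ [Var i j - Var (i - 1) j])"
proof -
  let ?V = "{0..r} \<times> {1..m}" and ?g = "var (i - 1, j)"
  obtain S where fs: "set fs \<subseteq> poly_ring_in (processed i C)"
    and rk: "regular_kernel_seq ?V S fs" and tr: "\<forall>\<rho>\<in>S. tracks_frontier m i C \<rho>"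
    using fp unfolding frontier_presented_def by blast
  have "processed i C \<subseteq> - {(i, j)}"
    using j(2) by (auto simp: processed_def)
  then have "set fs \<subseteq> poly_ring_in (- {(i, j)})"
    using fs poly_ring_in_mono by blast
  then have "regular_kernel_seq ?V ((\<lambda>\<rho>. subst \<rho> \<circ> var((i, j) := ?g)) ` S) (fs @ [var (i, j) - ?g])"
    using i j tr tracks_frontier_insert(1)[OF _ i(1) j]
    by (intro regular_kernel_seq_snoc_linear[OF rk]) (auto intro: var_in_poly_ring_in)
  moreover have "\<forall>\<rho>'\<in>(\<lambda>\<rho>. subst \<rho> \<circ> var((i, j) := ?g)) ` S. tracks_frontier m i (insert j C) \<rho>'"
    using tr tracks_frontier_insert(2)[OF _ i(1) j] by blast
  moreover have "set (fs @ [var (i, j) - ?g]) \<subseteq> poly_ring_in (processed i (insert j C))"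
    using fs i poly_ring_in_mono[of "processed i C" "processed i (insert j C)"]
    by (auto simp: processed_def intro!: poly_ring_in_intros)
  ultimately show ?thesis
    unfolding frontier_presented_def Var_eq_var by blast
qed

lemma tracks_frontier_pair:
  assumes tr: "tracks_frontier m i {} \<rho>" and s: "s \<in> {1..m}" "s + 1 \<in> {1..m}"
    and pq: "(p, q) = (s, s + 1) \<or> (p, q) = (s + 1, s)"
  shows "tracks_frontier m i {s, s + 1}
           (subst \<rho> \<circ> var((i, s) := var (i - 1, p), (i, s + 1) := var (i - 1, q)))"
proof -
  obtain \<pi> where \<pi>: "inj_on \<pi> {1..m}" and untouched: "\<And>v. v \<notin> processed i {} \<Longrightarrow> \<rho> v = var v"
    and frontier: "\<And>j. j \<in> {1..m} \<Longrightarrow> \<rho> (if j \<in> {} then (i, j) else (i - 1, j)) = var (0, \<pi> j)"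
    using tracks_frontierE[OF tr] by blast
  define \<tau> where "\<tau> = id(s := p, s + 1 := q)"
  have \<tau>: "inj_on \<tau> {1..m}" "\<tau> ` {1..m} \<subseteq> {1..m}"
    using pq s by (auto simp: \<tau>_def inj_on_def)
  show ?thesis
    unfolding tracks_frontier_def
  proof (intro conjI exI[of _ "\<pi> \<circ> \<tau>"] allI impI ballI)
    show "inj_on (\<pi> \<circ> \<tau>) {1..m}"
      using comp_inj_on[OF \<tau>(1) inj_on_subset[OF \<pi> \<tau>(2)]] .
  next
    fix v assume "v \<notin> processed i {s, s + 1}"
    then show "(subst \<rho> \<circ> var((i, s) := var (i - 1, p), (i, s + 1) := var (i - 1, q))) v = var v"
      using untouched by (auto simp: processed_def)
  next
    fix j assume j: "j \<in> {1..m}"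
    show "(subst \<rho> \<circ> var((i, s) := var (i - 1, p), (i, s + 1) := var (i - 1, q)))
        (if j \<in> {s, s + 1} then (i, j) else (i - 1, j)) = var (0, (\<pi> \<circ> \<tau>) j)"
      using frontier[OF j] frontier[OF s(1)] frontier[OF s(2)] pq
      by (auto simp: \<tau>_def)
  qed
qed

lemma tracks_frontier_pair_nonzero:
  assumes tr: "tracks_frontier m i {} \<rho>" and i: "1 \<le> i" and s: "s \<in> {1..m}" "s + 1 \<in> {1..m}"
  defines "x \<equiv> var (i, s)" and "y \<equiv> var (i, s + 1)" and "a \<equiv> var (i - 1, s)" and "b \<equiv> var (i - 1, s + 1)"
  shows "subst \<rho> (x + y - a - b) \<noteq> 0" "subst \<rho> (x - a) \<noteq> 0" "subst \<rho> (x - b) \<noteq> 0"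
    "subst \<rho> (b - a) \<noteq> 0"
proof -
  obtain \<pi> where \<pi>: "inj_on \<pi> {1..m}" and untouched: "\<And>v. v \<notin> processed i {} \<Longrightarrow> \<rho> v = var v"
    and frontier: "\<And>j. j \<in> {1..m} \<Longrightarrow> \<rho> (if j \<in> {} then (i, j) else (i - 1, j)) = var (0, \<pi> j)"
    using tracks_frontierE[OF tr] by blast
  have "\<pi> s \<noteq> \<pi> (s + 1)"
    using inj_onD[OF \<pi> _ s] by auto
  have images: "subst \<rho> x = x" "subst \<rho> y = y"
    "subst \<rho> a = var (0, \<pi> s)" "subst \<rho> b = var (0, \<pi> (s + 1))"
    using untouched[of "(i, s)"] untouched[of "(i, s + 1)"] frontier[OF s(1)] frontier[OF s(2)]
    by (simp_all add: processed_def x_def y_def a_def b_def)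
  have "x - (var (0, \<pi> s) + var (0, \<pi> (s + 1)) - y) \<noteq> 0"
    using i unfolding x_def y_def by (intro var_minus_nonzero poly_ring_in_intros) auto
  moreover have "x - var (0, \<pi> s) \<noteq> 0" "x - var (0, \<pi> (s + 1)) \<noteq> 0"
    "var (0, \<pi> (s + 1)) - var (0, \<pi> s) \<noteq> 0"
    using i \<open>\<pi> s \<noteq> \<pi> (s + 1)\<close> unfolding x_def by (intro var_minus_nonzero var_in_poly_ring_in; simp)+
  ultimately show "subst \<rho> (x + y - a - b) \<noteq> 0" "subst \<rho> (x - a) \<noteq> 0" "subst \<rho> (x - b) \<noteq> 0"
    "subst \<rho> (b - a) \<noteq> 0"
    using images by (simp_all add: subst_add subst_diff algebra_simps)
qed

lemma frontier_presented_quadratic: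
  assumes fp: "frontier_presented m r i {} fs" and i: "1 \<le> i" "i \<le> r" and s: "1 \<le> s" "s < m"
  shows "frontier_presented m r i {s, s + 1}
           (fs @ [Var i s + Var i (s + 1) - Var (i - 1) s - Var (i - 1) (s + 1),
                  Var i s * Var i (s + 1) - Var (i - 1) s * Var (i - 1) (s + 1)])"
proof -
  let ?V = "{0..r} \<times> {1..m}" and ?x = "(i, s)" and ?y = "(i, s + 1)"
  let ?a = "var (i - 1, s)" and ?b = "var (i - 1, s + 1)"
  obtain S where fs: "set fs \<subseteq> poly_ring_in (processed i {})"
    and rk: "regular_kernel_seq ?V S fs" and tr: "\<forall>\<rho>\<in>S. tracks_frontier m i {} \<rho>"
    using fp unfolding frontier_presented_def by blast
  let ?S2 = "(\<lambda>\<rho>. subst \<rho> \<circ> var(?x := ?a, ?y := ?b)) ` S \<union> (\<lambda>\<rho>. subst \<rho> \<circ> var(?x := ?b, ?y := ?a)) ` S"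
  have s_in: "s \<in> {1..m}" "s + 1 \<in> {1..m}"
    using s by auto
  have xy: "?x \<in> ?V" "?y \<in> ?V" "?x \<noteq> ?y"
    using i s by auto
  have ab: "?a \<in> poly_ring_in ?V" "?a \<in> poly_ring_in (- {?x, ?y})"
    "?b \<in> poly_ring_in ?V" "?b \<in> poly_ring_in (- {?x, ?y})"
    using i s by (auto intro!: var_in_poly_ring_in)
  have "processed i {} \<subseteq> - {?x, ?y}"
    by (auto simp: processed_def)
  then have fs_avoid: "set fs \<subseteq> poly_ring_in (- {?x, ?y})"
    using fs poly_ring_in_mono by blast
  have "regular_kernel_seq ?V ?S2 (fs @ [var ?x + var ?y - ?a - ?b, var ?x * var ?y - ?a * ?b])"
    by (rule regular_kernel_seq_snoc_quadratic[OF rk xy ab fs_avoid])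
      (use tr tracks_frontier_pair_nonzero[OF _ i(1) s_in] in simp_all)
  moreover have "tracks_frontier m i {s, s + 1} (subst \<rho> \<circ> var(?x := ?a, ?y := ?b))"
    "tracks_frontier m i {s, s + 1} (subst \<rho> \<circ> var(?x := ?b, ?y := ?a))" if \<rho>: "\<rho> \<in> S" for \<rho>
    using tracks_frontier_pair[OF tr[rule_format, OF \<rho>] s_in, of s "s + 1"]
      tracks_frontier_pair[OF tr[rule_format, OF \<rho>] s_in, of "s + 1" s]
    by simp_all
  then have "\<forall>\<rho>'\<in>?S2. tracks_frontier m i {s, s + 1} \<rho>'"
    by blast
  moreover have "set (fs @ [var ?x + var ?y - ?a - ?b, var ?x * var ?y - ?a * ?b])
      \<subseteq> poly_ring_in (processed i {s, s + 1})"
    using fs i poly_ring_in_mono[of "processed i {}" "processed i {s, s + 1}"]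
    by (auto simp: processed_def intro!: poly_ring_in_intros)
  ultimately show ?thesis
    unfolding frontier_presented_def Var_eq_var by blast
qed

lemma frontier_presented_linear_list:
  assumes "frontier_presented m r i C fs" "1 \<le> i" "i \<le> r" "distinct js" "set js \<subseteq> {1..m} - C"
  shows "frontier_presented m r i (C \<union> set js) (fs @ map (\<lambda>j. Var i j - Var (i - 1) j) js)"
  using assms
proof (induction js arbitrary: C fs)
  case Nil
  then show ?case by simp
next
  case (Cons j js)
  then have "frontier_presented m r i (insert j C) (fs @ [Var i j - Var (i - 1) j])"
    by (intro frontier_presented_linear) auto
  then have "frontier_presented m r i (insert j C \<union> set js)
      ((fs @ [Var i j - Var (i - 1) j]) @ map (\<lambda>j. Var i j - Var (i - 1) j) js)"
    using Cons.prems by (intro Cons.IH) auto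
  then show ?case
    by simp
qed

lemma frontier_presented_next_row:
  assumes "frontier_presented m r i {1..m} fs"
  shows "frontier_presented m r (i + 1) {} fs"
proof -
  have "processed i {1..m} \<subseteq> processed (i + 1) {}"
    by (auto simp: processed_def)
  moreover have "tracks_frontier m (i + 1) {} \<rho>" if "tracks_frontier m i {1..m} \<rho>" for \<rho>
    using that unfolding tracks_frontier_def processed_def by auto
  ultimately show ?thesis
    using assms poly_ring_in_mono unfolding frontier_presented_def by blast
qed

lemma frontier_presented_edge:
  assumes "frontier_presented m r i {} fs" "1 \<le> i" "i \<le> r" "1 \<le> s" "s < m"
  shows "frontier_presented m r (i + 1) {} (fs @ edge_elems m i s)"
proof -
  let ?js = "filter (\<lambda>j. j \<noteq> s \<and> j \<noteq> s + 1) [1..<m + 1]"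
  have "frontier_presented m r i ({s, s + 1} \<union> set ?js)
      ((fs @ [Var i s + Var i (s + 1) - Var (i - 1) s - Var (i - 1) (s + 1),
              Var i s * Var i (s + 1) - Var (i - 1) s * Var (i - 1) (s + 1)])
       @ map (\<lambda>j. Var i j - Var (i - 1) j) ?js)"
    using assms by (intro frontier_presented_linear_list frontier_presented_quadratic) auto
  moreover have "{s, s + 1} \<union> set ?js = {1..m}"
    using assms by auto
  ultimately show ?thesis
    using frontier_presented_next_row by (simp add: edge_elems_def)
qed

lemma full_seq_Suc: "full_seq m (Suc n) s = full_seq m n s @ edge_elems m (Suc n) (s (Suc n))"
  by (simp add: full_seq_def)

lemma frontier_presented_full_seq:
  assumes "\<And>i. 1 \<le> i \<Longrightarrow> i \<le> r \<Longrightarrow> 1 \<le> s i \<and> s i \<le> m - 1" and "n \<le> r"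
  shows "frontier_presented m r (n + 1) {} (full_seq m n s)"
  using assms(2)
proof (induction n)
  case 0
  then show ?case
    using frontier_presented_start by (simp add: full_seq_def)
next
  case (Suc n)
  then have "frontier_presented m r (Suc n + 1) {} (full_seq m n s @ edge_elems m (Suc n) (s (Suc n)))"
    using assms(1)[of "Suc n"] by (intro frontier_presented_edge) auto
  then show ?case
    by (simp add: full_seq_Suc)
qed

theorem mainTheorem1:
  fixes m r :: nat and s :: "nat \<Rightarrow> nat"
  assumes "m \<ge> 2" and "r \<ge> 1"
    and "\<And>i. 1 \<le> i \<Longrightarrow> i \<le> r \<Longrightarrow> 1 \<le> s i \<and> s i \<le> m - 1"
  shows "regular_seq_in (poly_ring_in ({0..r} \<times> {1..m})) (full_seq m r s)"
proof -
  have "frontier_presented m r (r + 1) {} (full_seq m r s)"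
    using frontier_presented_full_seq[of r s m r] assms(3) by simp
  then show ?thesis
    unfolding frontier_presented_def regular_kernel_seq_def by blast
qed

end
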